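(* Let $\alpha\in(0,1)$, $m\ge1$, $a_0,\dots,a_{m-1}\in\mathbb{C}$, and let $\mathcal{S}$ be the set of solutions $x$ of $${}^LD^{m\circ\alpha}x(t)+a_{m-1}{}^LD^{(m-1)\circ\alpha}x(t)+\dots+a_1{}^LD^\alpha x(t)+a_0x(t)=0 .$$ Then $\mathcal{S}$ is a complex vector space of dimension $m$, and the map $x\mapsto(x(0),{}^LD^\alpha x(0),\dots,{}^LD^{(m-1)\circ\alpha}x(0))$ is an isomorphism $\mathcal{S}\to\mathbb{C}^m$.
   Context: Solutions are taken among functions $x:[0,\infty)\to\mathbb{C}$ given by power series $\sum_nx_nt^n$ convergent for all $t\ge0$, the equation holding for every $t\ge0$. L-fractional derivative: ${}^LD^\alpha x(t)=\frac{\Gamma(2-\alpha)}{t^{1-\alpha}}\cdot\frac{1}{\Gamma(1-\alpha)}\int_0^t (t-\tau)^{-\alpha}x'(\tau)d\tau$ for $t>0$; on such power series it acts termwise, ${}^LD^\alpha\sum_nx_nt^n=\sum_nx_{n+1}\frac{\Gamma(n+2)\Gamma(2-\alpha)}{\Gamma(n+2-\alpha)}t^n$, which also defines its value at $t=0$. ${}^LD^{k\circ\alpha}$ is the $k$-fold composition of ${}^LD^\alpha$. *)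

theory Defs
  imports "HOL-Analysis.Analysis" "HOL-Library.Function_Algebras"
begin

text \<open>A solution is represented by its coefficient sequence c, x(t) = sum of c n * t^n, t \<ge> 0.\<close>

definition ps_eval :: "(nat \<Rightarrow> complex) \<Rightarrow> real \<Rightarrow> complex" where
  "ps_eval c t = (\<Sum>n. c n * complex_of_real t ^ n)"

definition entire_ps :: "(nat \<Rightarrow> complex) \<Rightarrow> bool" where
  "entire_ps c \<longleftrightarrow> (\<forall>t::real. t \<ge> 0 \<longrightarrow> summable (\<lambda>n. c n * complex_of_real t ^ n))"

text \<open>L-fractional derivative acting termwise on coefficient sequences.\<close>
definition LD :: "real \<Rightarrow> (nat \<Rightarrow> complex) \<Rightarrow> (nat \<Rightarrow> complex)" where
  "LD \<alpha> c = (\<lambda>n. c (Suc n) *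
      complex_of_real (Gamma (real n + 2) * Gamma (2 - \<alpha>) / Gamma (real n + 2 - \<alpha>)))"

definition cscale :: "complex \<Rightarrow> (nat \<Rightarrow> complex) \<Rightarrow> (nat \<Rightarrow> complex)" where
  "cscale z x = (\<lambda>n. z * x n)"

end

theory Submission
  imports Defs "HOL-Complex_Analysis.Cauchy_Integral_Formula"
begin

text \<open>On coefficient sequences the L-fractional derivative is a weighted shift,
  \<open>(LD c) n = w n * c (n + 1)\<close> with \<open>w n = \<Gamma>(n + 2) \<Gamma>(2 - \<alpha>) / \<Gamma>(n + 2 - \<alpha>)\<close>. By the identity
  theorem for power series, \<open>c\<close> solves the equation iff its coefficients satisfy an
  \<open>m\<close>-term recurrence whose leading coefficient never vanishes; so \<open>c\<close> is determined by
  \<open>c 0, \<dots>, c (m - 1)\<close>, and these can be prescribed freely. Since \<open>w n \<ge> \<alpha> H (n + 1) \<rightarrow> \<infinity>\<close>,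
  the recurrence forces \<open>\<bar>c j\<bar> r ^ j\<close> to stay bounded for every \<open>r\<close>, so every solution of
  the recurrence is an entire power series. The initial-value map is \<open>c k\<close> times a
  nonzero constant, hence a linear bijection onto \<open>\<complex>\<^sup>m\<close>.\<close>

definition LD_weight :: "real \<Rightarrow> nat \<Rightarrow> real" where
  "LD_weight \<alpha> n = Gamma (real n + 2) * Gamma (2 - \<alpha>) / Gamma (real n + 2 - \<alpha>)"

lemma LD_eq: "LD \<alpha> c = (\<lambda>n. c (Suc n) * of_real (LD_weight \<alpha> n))"
  unfolding LD_def LD_weight_def by simp

lemma LD_weight_0:
  assumes "\<alpha> < 1"
  shows "LD_weight \<alpha> 0 = 1"
proof -
  have "Gamma (2 - \<alpha>) > 0"
    using assms by simp
  then show ?thesis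
    using Gamma_numeral[of "Num.Bit0 Num.One", where 'a = real] by (simp add: LD_weight_def)
qed

lemma LD_weight_Suc:
  assumes "\<alpha> < 1"
  shows "LD_weight \<alpha> (Suc n) = LD_weight \<alpha> n * ((real n + 2) / (real n + 2 - \<alpha>))"
proof -
  have np: "real n + 2 \<notin> \<int>\<^sub>\<le>\<^sub>0" "real n + 2 - \<alpha> \<notin> \<int>\<^sub>\<le>\<^sub>0"
    using assms by (auto simp: nonpos_Ints_def)
  have "Gamma (real (Suc n) + 2) = (real n + 2) * Gamma (real n + 2)"
    using Gamma_plus1[OF np(1)] by (simp add: add_ac)
  moreover have "Gamma (real (Suc n) + 2 - \<alpha>) = (real n + 2 - \<alpha>) * Gamma (real n + 2 - \<alpha>)"
    using Gamma_plus1[OF np(2)] by (simp add: algebra_simps)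
  moreover have "Gamma (real n + 2 - \<alpha>) > 0" "real n + 2 - \<alpha> > 0"
    using assms by auto
  ultimately show ?thesis
    unfolding LD_weight_def by (simp add: field_simps)
qed

lemma LD_weight_ge_1:
  assumes "0 < \<alpha>" "\<alpha> < 1"
  shows "LD_weight \<alpha> n \<ge> 1"
proof (induction n)
  case (Suc n)
  have "1 \<le> (real n + 2) / (real n + 2 - \<alpha>)"
    using assms by simp
  then have "1 * 1 \<le> LD_weight \<alpha> n * ((real n + 2) / (real n + 2 - \<alpha>))"
    using Suc by (intro mult_mono) auto
  then show ?case
    using LD_weight_Suc[OF assms(2)] by simp
qed (use LD_weight_0 assms in simp)

lemma LD_weight_le:
  assumes "0 < \<alpha>" "\<alpha> < 1"
  shows "LD_weight \<alpha> n \<le> real n + 1"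
proof (induction n)
  case (Suc n)
  have pos: "real n + 2 - \<alpha> > 0"
    using assms by simp
  have "LD_weight \<alpha> (Suc n) \<le> (real n + 1) * ((real n + 2) / (real n + 2 - \<alpha>))"
    unfolding LD_weight_Suc[OF assms(2)] using Suc pos by (intro mult_right_mono) auto
  also have "\<dots> \<le> real n + 2"
    using assms pos by (simp add: pos_divide_le_eq mult_right_mono)
  finally show ?case
    by simp
qed (use LD_weight_0 assms in simp)

lemma LD_weight_ge_harm:
  assumes "0 < \<alpha>" "\<alpha> < 1"
  shows "LD_weight \<alpha> n \<ge> \<alpha> * harm (Suc n)"
proof (induction n)
  case (Suc n)
  have pos: "real n + 2 - \<alpha> > 0"
    using assms by simp
  have "\<alpha> / (real n + 2) \<le> 1 * (\<alpha> / (real n + 2 - \<alpha>))"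
    using assms pos by (simp add: divide_left_mono)
  also have "\<dots> \<le> LD_weight \<alpha> n * (\<alpha> / (real n + 2 - \<alpha>))"
    using LD_weight_ge_1[OF assms] assms pos by (intro mult_right_mono) auto
  also have "LD_weight \<alpha> n * (\<alpha> / (real n + 2 - \<alpha>)) = LD_weight \<alpha> (Suc n) - LD_weight \<alpha> n"
    using pos by (simp add: LD_weight_Suc[OF assms(2)] field_simps)
  finally have "\<alpha> / (real n + 2) \<le> LD_weight \<alpha> (Suc n) - LD_weight \<alpha> n" .
  moreover have "\<alpha> * harm (Suc (Suc n)) = \<alpha> * harm (Suc n) + \<alpha> / (real n + 2)"
    by (simp add: harm_Suc field_simps)
  ultimately show ?case
    using Suc by linarith
qed (use LD_weight_0 assms in \<open>simp add: harm_def\<close>)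

lemma filterlim_LD_weight_at_top:
  assumes "0 < \<alpha>" "\<alpha> < 1"
  shows "filterlim (LD_weight \<alpha>) at_top sequentially"
proof (rule filterlim_at_top_mono)
  have "filterlim (\<lambda>n. harm (Suc n) :: real) at_top sequentially"
    using harm_at_top filterlim_sequentially_Suc by blast
  then show "filterlim (\<lambda>n. \<alpha> * harm (Suc n)) at_top sequentially"
    using assms(1) by (simp add: filterlim_tendsto_pos_mult_at_top[OF tendsto_const])
qed (use LD_weight_ge_harm[OF assms] in auto)

definition LD_weight_prod :: "real \<Rightarrow> nat \<Rightarrow> nat \<Rightarrow> real" where
  "LD_weight_prod \<alpha> n k = (\<Prod>i<k. LD_weight \<alpha> (n + i))"

lemma LD_funpow_apply:
  "(LD \<alpha> ^^ k) c n = c (n + k) * of_real (LD_weight_prod \<alpha> n k)"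
proof (induction k arbitrary: n)
  case (Suc k)
  have "(LD \<alpha> ^^ Suc k) c n = (LD \<alpha> ^^ k) c (Suc n) * of_real (LD_weight \<alpha> n)"
    by (simp add: LD_eq)
  also have "\<dots> = c (n + Suc k) * of_real (LD_weight_prod \<alpha> (Suc n) k * LD_weight \<alpha> n)"
    using Suc by simp
  also have "LD_weight_prod \<alpha> (Suc n) k * LD_weight \<alpha> n = LD_weight_prod \<alpha> n (Suc k)"
    unfolding LD_weight_prod_def
    by (simp del: prod.lessThan_Suc add: prod.lessThan_Suc_shift mult.commute)
  finally show ?case .
qed (simp add: LD_weight_prod_def)

lemma LD_weight_prod_ge_1:
  assumes "0 < \<alpha>" "\<alpha> < 1"
  shows "LD_weight_prod \<alpha> n k \<ge> 1"
  unfolding LD_weight_prod_def using LD_weight_ge_1[OF assms] by (intro prod_ge_1) auto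

lemma LD_weight_prod_nonzero:
  assumes "0 < \<alpha>" "\<alpha> < 1"
  shows "complex_of_real (LD_weight_prod \<alpha> n k) \<noteq> 0"
  using LD_weight_prod_ge_1[OF assms, of n k] by auto

lemma LD_weight_prod_mult_le:
  assumes "0 < \<alpha>" "\<alpha> < 1" "k < m"
  shows "LD_weight_prod \<alpha> n k * LD_weight \<alpha> (n + (m - 1)) \<le> LD_weight_prod \<alpha> n m"
proof -
  obtain m' where m: "m = Suc m'"
    using assms(3) by (cases m) auto
  have "LD_weight_prod \<alpha> n k \<le> LD_weight_prod \<alpha> n m'"
    unfolding LD_weight_prod_def using assms m LD_weight_ge_1[OF assms(1,2)]
    by (intro prod_mono2) (auto intro: order.trans[OF zero_le_one])
  then show ?thesis
    using m LD_weight_ge_1[OF assms(1,2), of "n + m'"]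
    by (simp add: LD_weight_prod_def mult_right_mono)
qed

lemma ps_eval_0: "ps_eval c 0 = c 0"
  unfolding ps_eval_def by simp

lemma LD_funpow_at_0: "ps_eval ((LD \<alpha> ^^ k) c) 0 = c k * of_real (LD_weight_prod \<alpha> 0 k)"
  by (simp add: ps_eval_0 LD_funpow_apply)

lemma entire_ps_summable_norm:
  assumes "entire_ps c"
  shows "summable (\<lambda>n. norm (c n * z ^ n))"
proof (rule powser_insidea)
  have "norm z + 1 \<ge> 0"
    by simp
  then show "summable (\<lambda>n. c n * complex_of_real (norm z + 1) ^ n)"
    using assms unfolding entire_ps_def by blast
qed (simp add: norm_of_real)

lemma entire_ps_sums:
  assumes "entire_ps c"
  shows "(\<lambda>n. c n * z ^ n) sums (\<Sum>n. c n * z ^ n)"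
  using summable_norm_cancel[OF entire_ps_summable_norm[OF assms]] by (rule summable_sums)

text \<open>Since \<open>LD_weight \<alpha> n \<le> n + 1\<close>, \<open>LD\<close> is dominated by formal differentiation.\<close>

lemma entire_ps_LD:
  assumes "0 < \<alpha>" "\<alpha> < 1" "entire_ps c"
  shows "entire_ps (LD \<alpha> c)"
  unfolding entire_ps_def
proof (intro allI impI)
  fix t :: real
  assume t: "t \<ge> 0"
  have "summable (\<lambda>n. diffs c n * complex_of_real (t + 1) ^ n)"
  proof (rule termdiff_converges[where K = "t + 2"])
    show "norm (complex_of_real (t + 1)) < t + 2"
      using t by (simp add: norm_of_real)
  qed (rule sums_summable[OF entire_ps_sums[OF assms(3)]])
  then have diffs: "summable (\<lambda>n. norm (diffs c n * complex_of_real t ^ n))"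
    by (rule powser_insidea) (use t in \<open>simp add: norm_of_real\<close>)
  show "summable (\<lambda>n. LD \<alpha> c n * complex_of_real t ^ n)"
  proof (rule summable_comparison_test[OF _ diffs], intro exI allI impI)
    fix n :: nat
    have "norm (LD \<alpha> c n * complex_of_real t ^ n)
        = norm (c (Suc n)) * LD_weight \<alpha> n * norm (complex_of_real t ^ n)"
      using LD_weight_ge_1[OF assms(1,2), of n] by (simp add: LD_eq norm_mult)
    also have "\<dots> \<le> norm (c (Suc n)) * (real n + 1) * norm (complex_of_real t ^ n)"
      using LD_weight_le[OF assms(1,2), of n] by (intro mult_right_mono mult_left_mono) auto
    also have "\<dots> = norm (diffs c n * complex_of_real t ^ n)"
    proof -
      have "norm (of_nat (Suc n) :: complex) = real n + 1"
        by (simp only: norm_of_nat)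
      then show ?thesis
        by (simp add: diffs_def norm_mult del: of_nat_Suc)
    qed
    finally show "norm (LD \<alpha> c n * complex_of_real t ^ n) \<le> norm (diffs c n * complex_of_real t ^ n)" .
  qed
qed

lemma entire_ps_LD_funpow:
  assumes "0 < \<alpha>" "\<alpha> < 1" "entire_ps c"
  shows "entire_ps ((LD \<alpha> ^^ k) c)"
  by (induction k) (use assms entire_ps_LD in auto)

text \<open>Identity theorem: the zeros of a nonzero power series are isolated, so it cannot vanish
  on \<open>[0, \<infinity>)\<close>.\<close>

lemma entire_ps_eq_0:
  assumes "entire_ps e" "\<And>t. t \<ge> 0 \<Longrightarrow> ps_eval e t = 0"
  shows "e k = 0"
proof (rule ccontr)
  assume ek: "e k \<noteq> 0"
  define f where "f z = (\<Sum>n. e n * z ^ n)" for z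
  have f_real: "f (of_real t) = 0" if "t \<ge> 0" for t
    using assms(2)[OF that] by (simp add: f_def ps_eval_def)
  have pos: "k > 0"
    by (rule gr0I) (use ek assms(2)[of 0] in \<open>simp add: ps_eval_0\<close>)
  have sums: "(\<lambda>n. e n * (z - 0) ^ n) sums f z" if "norm (z - 0) < 1" for z
    unfolding f_def using entire_ps_sums[OF assms(1)] by simp
  have f0: "f 0 = 0"
    using f_real[of 0] by simp
  obtain s where "0 < s" "\<And>z. z \<in> cball 0 s - {0} \<Longrightarrow> f z \<noteq> 0"
    using powser_0_nonzero[OF zero_less_one sums f0 ek pos] by metis
  then show False
    using f_real[of s] by (simp add: norm_of_real)
qed

lemma entire_ps_if_bounded:
  assumes "\<And>r. r \<ge> 1 \<Longrightarrow> \<exists>K. \<forall>j. norm (c j) * r ^ j \<le> K"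
  shows "entire_ps c"
  unfolding entire_ps_def
proof (intro allI impI)
  fix t :: real
  assume t: "t \<ge> 0"
  define r where "r = t + 1"
  obtain K where K: "\<And>j. norm (c j) * r ^ j \<le> K"
    using assms[of r] t unfolding r_def by auto
  have r: "r > 0" "norm (t / r) < 1"
    using t unfolding r_def by auto
  show "summable (\<lambda>n. c n * complex_of_real t ^ n)"
  proof (rule summable_comparison_test[OF _ summable_mult[OF summable_geometric[OF r(2)]]],
      intro exI allI impI)
    fix n :: nat
    have "norm (c n * complex_of_real t ^ n) = (norm (c n) * r ^ n) * (t / r) ^ n"
      using t r by (simp add: norm_mult norm_power power_divide)
    also have "\<dots> \<le> K * (t / r) ^ n"
      using K t r by (intro mult_right_mono) auto
    finally show "norm (c n * complex_of_real t ^ n) \<le> K * (t / r) ^ n" .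
  qed
qed

text \<open>A sequence whose \<open>m\<close>-step recurrence bound has a weight tending to infinity grows slower
  than any geometric sequence: beyond the point where the weight exceeds \<open>r ^ m \<Sum> A + 1\<close>,
  the bound \<open>K\<close> on \<open>u j * r ^ j\<close> propagates by strong induction.\<close>

lemma bounded_geometric_if_recurrence_bound:
  fixes u W A :: "nat \<Rightarrow> real"
  assumes rec: "\<And>n. u (n + m) * W n \<le> (\<Sum>k<m. A k * u (n + k))"
    and u: "\<And>n. u n \<ge> 0" and A: "\<And>k. A k \<ge> 0"
    and W: "filterlim W at_top sequentially" and r: "r \<ge> 1"
  shows "\<exists>K. \<forall>j. u j * r ^ j \<le> K"
proof -
  define d where "d j = u j * r ^ j" for j
  define A\<^sub>\<Sigma> where "A\<^sub>\<Sigma> = (\<Sum>k<m. A k)"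
  have "A\<^sub>\<Sigma> \<ge> 0"
    unfolding A\<^sub>\<Sigma>_def using A by (intro sum_nonneg) auto
  then have "r ^ m * A\<^sub>\<Sigma> \<ge> 0"
    using r by simp
  obtain N where N: "\<And>n. n \<ge> N \<Longrightarrow> W n \<ge> r ^ m * A\<^sub>\<Sigma> + 1"
    using W unfolding filterlim_at_top eventually_sequentially by blast
  define K where "K = Max (d ` {..N + m})"
  have base: "d j \<le> K" if "j \<le> N + m" for j
    unfolding K_def using that by (intro Max_ge) auto
  have "K \<ge> 0"
    using base[of 0] u[of 0] r by (simp add: d_def)
  have "d j \<le> K" for j
  proof (induction j rule: less_induct)
    case (less j)
    show ?case
    proof (cases "j \<le> N + m")
      case False
      define n where "n = j - m"
      have j: "j = n + m" and "n \<ge> N"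
        using False unfolding n_def by auto
      then have WA: "W n \<ge> r ^ m * A\<^sub>\<Sigma> + 1"
        using N by simp
      have "d j * W n = (u (n + m) * W n) * r ^ (n + m)"
        unfolding d_def j by (simp add: mult_ac)
      also have "\<dots> \<le> (\<Sum>k<m. A k * u (n + k)) * r ^ (n + m)"
        using rec r by (intro mult_right_mono) auto
      also have "\<dots> = (\<Sum>k<m. A k * (d (n + k) * r ^ (m - k)))"
        unfolding sum_distrib_right d_def
        by (intro sum.cong refl) (simp add: mult.assoc power_add[symmetric])
      also have "\<dots> \<le> (\<Sum>k<m. A k * (K * r ^ m))"
        using less j r A u \<open>K \<ge> 0\<close>
        by (intro sum_mono mult_left_mono mult_mono power_increasing) (auto simp: d_def)
      also have "\<dots> = (r ^ m * A\<^sub>\<Sigma>) * K"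
        unfolding A\<^sub>\<Sigma>_def by (simp add: sum_distrib_left sum_distrib_right mult_ac)
      also have "\<dots> \<le> W n * K"
        using WA \<open>K \<ge> 0\<close> by (intro mult_right_mono) auto
      finally have "d j * W n \<le> K * W n"
        by (simp add: mult.commute)
      moreover have "W n > 0"
        using WA \<open>r ^ m * A\<^sub>\<Sigma> \<ge> 0\<close> by linarith
      ultimately show ?thesis
        by (rule mult_right_le_imp_le)
    qed (rule base)
  qed
  then show ?thesis
    unfolding d_def by blast
qed

interpretation seq: vector_space cscale
  by unfold_locales (simp_all add: cscale_def fun_eq_iff algebra_simps)

interpretation seq_pair: vector_space_pair cscale cscale ..

lemma (in vector_space_pair) dim_image_eq_inj_on:
  assumes "Vector_Spaces.linear s1 s2 f" "vs1.subspace S" "inj_on f S"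
  shows "vs2.dim (f ` S) = vs1.dim S"
proof -
  obtain B where B: "B \<subseteq> S" "vs1.independent B" "S \<subseteq> vs1.span B" "card B = vs1.dim S"
    using vs1.basis_exists .
  have "vs1.span B \<subseteq> S"
    using B(1) assms(2) by (rule vs1.span_minimal)
  with assms(3) have inj: "inj_on f (vs1.span B)"
    by (rule inj_on_subset)
  show ?thesis
  proof (rule vs2.dim_unique)
    show "f ` S \<subseteq> vs2.span (f ` B)"
      using B(3) by (auto simp: linear_span_image[OF assms(1)])
    show "vs2.independent (f ` B)"
      using B(2) inj by (rule linear_independent_injective_image[OF assms(1)])
    show "card (f ` B) = vs1.dim S"
      using B(4) inj_on_subset[OF inj vs1.span_superset] by (simp add: card_image)
  qed (use B(1) in auto)
qed

lemma dim_eventually_zero_sequences: "seq.dim {v. \<forall>k\<ge>m. v k = 0} = m"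
proof -
  define e where "e i = (\<lambda>j. if j = i then 1 else 0 :: complex)" for i :: nat
  have inj: "inj_on e {..<m}"
    by (rule inj_onI) (metis e_def zero_neq_one)
  have sum_e: "(\<Sum>i<m. cscale (u i) (e i)) k = (if k < m then u k else 0)" for u k
    by (induction m) (auto simp: cscale_def e_def less_Suc_eq)
  show ?thesis
  proof (rule seq.dim_unique)
    show "{v. \<forall>k\<ge>m. v k = 0} \<subseteq> seq.span (e ` {..<m})"
    proof
      fix v :: "nat \<Rightarrow> complex"
      assume "v \<in> {v. \<forall>k\<ge>m. v k = 0}"
      then have "v = (\<Sum>i<m. cscale (v i) (e i))"
        using sum_e by (auto simp: fun_eq_iff)
      also have "\<dots> \<in> seq.span (e ` {..<m})"
        by (intro seq.span_sum seq.span_scale seq.span_base) auto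
      finally show "v \<in> seq.span (e ` {..<m})" .
    qed
    show "seq.independent (e ` {..<m})"
    proof (rule seq.independent_if_scalars_zero)
      fix u x
      assume u: "(\<Sum>x\<in>e ` {..<m}. cscale (u x) x) = 0" and "x \<in> e ` {..<m}"
      then obtain k where k: "k < m" "x = e k"
        by auto
      have "(\<Sum>i<m. cscale (u (e i)) (e i)) = 0"
        using u by (simp add: sum.reindex[OF inj])
      then show "u x = 0"
        using sum_e[of "\<lambda>i. u (e i)" k] k by simp
    qed simp
    show "card (e ` {..<m}) = m"
      using card_image[OF inj] by simp
  qed (auto simp: e_def)
qed

definition LD_ode_lhs :: "real \<Rightarrow> nat \<Rightarrow> (nat \<Rightarrow> complex) \<Rightarrow> (nat \<Rightarrow> complex) \<Rightarrow> nat \<Rightarrow> complex" where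
  "LD_ode_lhs \<alpha> m a c n = (LD \<alpha> ^^ m) c n + (\<Sum>k<m. a k * (LD \<alpha> ^^ k) c n)"

lemma LD_ode_lhs_eq:
  "LD_ode_lhs \<alpha> m a c n = c (n + m) * of_real (LD_weight_prod \<alpha> n m)
     + (\<Sum>k<m. a k * (c (n + k) * of_real (LD_weight_prod \<alpha> n k)))"
  unfolding LD_ode_lhs_def LD_funpow_apply by simp

lemma LD_ode_lhs_sums:
  assumes "0 < \<alpha>" "\<alpha> < 1" "entire_ps c" "t \<ge> 0"
  shows "(\<lambda>n. LD_ode_lhs \<alpha> m a c n * complex_of_real t ^ n) sums
           (ps_eval ((LD \<alpha> ^^ m) c) t + (\<Sum>k<m. a k * ps_eval ((LD \<alpha> ^^ k) c) t))"
proof -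
  have "(\<lambda>n. (LD \<alpha> ^^ k) c n * complex_of_real t ^ n) sums ps_eval ((LD \<alpha> ^^ k) c) t" for k
    unfolding ps_eval_def by (rule entire_ps_sums[OF entire_ps_LD_funpow[OF assms(1-3)]])
  then have "(\<lambda>n. (LD \<alpha> ^^ m) c n * complex_of_real t ^ n
                 + (\<Sum>k<m. a k * ((LD \<alpha> ^^ k) c n * complex_of_real t ^ n)))
      sums (ps_eval ((LD \<alpha> ^^ m) c) t + (\<Sum>k<m. a k * ps_eval ((LD \<alpha> ^^ k) c) t))"
    by (intro sums_add sums_sum sums_mult)
  then show ?thesis
    unfolding LD_ode_lhs_def by (simp add: distrib_right sum_distrib_right mult.assoc)
qed

lemma LD_ode_lhs_norm_bound:
  assumes "0 < \<alpha>" "\<alpha> < 1" "LD_ode_lhs \<alpha> m a c n = 0"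
  shows "norm (c (n + m)) * LD_weight \<alpha> (n + (m - 1)) \<le> (\<Sum>k<m. norm (a k) * norm (c (n + k)))"
proof -
  define W where "W = LD_weight \<alpha> (n + (m - 1))"
  define P where "P k = LD_weight_prod \<alpha> n k" for k
  have "W > 0" and P_pos: "P k > 0" for k
    unfolding W_def P_def using LD_weight_ge_1[OF assms(1,2)] LD_weight_prod_ge_1[OF assms(1,2)]
    by (auto intro: less_le_trans[OF zero_less_one])
  have "c (n + m) * of_real (P m) = - (\<Sum>k<m. a k * (c (n + k) * of_real (P k)))"
    using assms(3) unfolding LD_ode_lhs_eq P_def by (simp add: eq_neg_iff_add_eq_0)
  then have "norm (c (n + m)) * P m = norm (\<Sum>k<m. a k * (c (n + k) * of_real (P k)))"
    using P_pos[of m] by (metis abs_of_pos norm_minus_cancel norm_mult norm_of_real)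
  also have "\<dots> \<le> (\<Sum>k<m. norm (a k * (c (n + k) * of_real (P k))))"
    by (rule norm_sum)
  also have "\<dots> = (\<Sum>k<m. norm (a k) * norm (c (n + k)) * P k)"
    by (simp add: norm_mult mult.assoc abs_of_pos[OF P_pos])
  finally have "norm (c (n + m)) * P m * W \<le> (\<Sum>k<m. norm (a k) * norm (c (n + k)) * P k) * W"
    using \<open>W > 0\<close> by (simp add: mult_right_mono)
  also have "\<dots> = (\<Sum>k<m. norm (a k) * norm (c (n + k)) * (P k * W))"
    by (simp add: sum_distrib_right mult.assoc)
  also have "\<dots> \<le> (\<Sum>k<m. norm (a k) * norm (c (n + k)) * P m)"
    unfolding W_def P_def by (intro sum_mono mult_left_mono LD_weight_prod_mult_le[OF assms(1,2)]) auto
  also have "\<dots> = (\<Sum>k<m. norm (a k) * norm (c (n + k))) * P m"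
    by (simp add: sum_distrib_right)
  finally have "(norm (c (n + m)) * W) * P m \<le> (\<Sum>k<m. norm (a k) * norm (c (n + k))) * P m"
    by (simp add: mult_ac)
  then show ?thesis
    using P_pos[of m] unfolding W_def by simp
qed

lemma entire_ps_if_LD_ode_lhs_eq_0:
  assumes "0 < \<alpha>" "\<alpha> < 1" "\<And>n. LD_ode_lhs \<alpha> m a c n = 0"
  shows "entire_ps c"
proof (rule entire_ps_if_bounded, rule bounded_geometric_if_recurrence_bound)
  show "norm (c (n + m)) * LD_weight \<alpha> (n + (m - 1)) \<le> (\<Sum>k<m. norm (a k) * norm (c (n + k)))" for n
    using LD_ode_lhs_norm_bound[OF assms(1,2,3)] .
  show "filterlim (\<lambda>n. LD_weight \<alpha> (n + (m - 1))) at_top sequentially"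
    using filterlim_compose[OF filterlim_LD_weight_at_top[OF assms(1,2)] filterlim_add_const_nat_at_top] .
qed auto

lemma LD_ode_solutions_eq:
  assumes "0 < \<alpha>" "\<alpha> < 1"
  shows "{c. entire_ps c \<and>
             (\<forall>t::real. t \<ge> 0 \<longrightarrow>
                ps_eval ((LD \<alpha> ^^ m) c) t + (\<Sum>k<m. a k * ps_eval ((LD \<alpha> ^^ k) c) t) = 0)}
       = {c. \<forall>n. LD_ode_lhs \<alpha> m a c n = 0}" (is "?S = ?R")
proof (intro equalityI subsetI)
  fix c
  assume "c \<in> ?S"
  then have c: "entire_ps c"
    and eq: "\<And>t. t \<ge> 0 \<Longrightarrow> ps_eval ((LD \<alpha> ^^ m) c) t + (\<Sum>k<m. a k * ps_eval ((LD \<alpha> ^^ k) c) t) = 0"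
    by auto
  have sums: "(\<lambda>n. LD_ode_lhs \<alpha> m a c n * complex_of_real t ^ n) sums 0" if "t \<ge> 0" for t
    using LD_ode_lhs_sums[OF assms c that, of m a] eq[OF that] by simp
  have "entire_ps (LD_ode_lhs \<alpha> m a c)"
    unfolding entire_ps_def using sums sums_summable by blast
  moreover have "ps_eval (LD_ode_lhs \<alpha> m a c) t = 0" if "t \<ge> 0" for t
    unfolding ps_eval_def using sums[OF that] by (simp add: sums_iff)
  ultimately show "c \<in> ?R"
    using entire_ps_eq_0 by blast
next
  fix c
  assume "c \<in> ?R"
  then have lhs: "\<And>n. LD_ode_lhs \<alpha> m a c n = 0"
    by simp
  then have c: "entire_ps c"
    by (rule entire_ps_if_LD_ode_lhs_eq_0[OF assms])
  have "ps_eval ((LD \<alpha> ^^ m) c) t + (\<Sum>k<m. a k * ps_eval ((LD \<alpha> ^^ k) c) t) = 0" if "t \<ge> 0" for t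
    using LD_ode_lhs_sums[OF assms c that, of m a] by (simp add: lhs sums_iff)
  then show "c \<in> ?S"
    using c by simp
qed

lemma LD_ode_lhs_add: "LD_ode_lhs \<alpha> m a (c + d) n = LD_ode_lhs \<alpha> m a c n + LD_ode_lhs \<alpha> m a d n"
  unfolding LD_ode_lhs_eq by (simp add: algebra_simps sum.distrib)

lemma LD_ode_lhs_cscale: "LD_ode_lhs \<alpha> m a (cscale z c) n = z * LD_ode_lhs \<alpha> m a c n"
  unfolding LD_ode_lhs_eq cscale_def by (simp add: algebra_simps sum_distrib_left)

lemma LD_ode_lhs_zero: "LD_ode_lhs \<alpha> m a 0 n = 0"
  unfolding LD_ode_lhs_eq by simp

lemma LD_ode_lhs_eq_0_imp_eq_0:
  assumes "0 < \<alpha>" "\<alpha> < 1" "\<And>n. LD_ode_lhs \<alpha> m a c n = 0" "\<And>k. k < m \<Longrightarrow> c k = 0"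
  shows "c j = 0"
proof (induction j rule: less_induct)
  case (less j)
  show ?case
  proof (cases "j < m")
    case False
    then obtain n where j: "j = n + m"
      by (metis add.commute le_iff_add not_less)
    have "(\<Sum>k<m. a k * (c (n + k) * of_real (LD_weight_prod \<alpha> n k))) = 0"
      using less j by (intro sum.neutral) auto
    then have "c (n + m) * of_real (LD_weight_prod \<alpha> n m) = 0"
      using assms(3)[of n] unfolding LD_ode_lhs_eq by simp
    then show ?thesis
      using j LD_weight_prod_nonzero[OF assms(1,2)] by simp
  qed (rule assms(4))
qed

function LD_ode_sol :: "real \<Rightarrow> nat \<Rightarrow> (nat \<Rightarrow> complex) \<Rightarrow> (nat \<Rightarrow> complex) \<Rightarrow> nat \<Rightarrow> complex" where
  "LD_ode_sol \<alpha> m a v n =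
     (if n < m then v n / of_real (LD_weight_prod \<alpha> 0 n)
      else - (\<Sum>k<m. a k * (LD_ode_sol \<alpha> m a v (n - m + k) * of_real (LD_weight_prod \<alpha> (n - m) k)))
           / of_real (LD_weight_prod \<alpha> (n - m) m))"
  by auto
termination
  by (relation "Wellfounded.measure (\<lambda>(\<alpha>, m, a, v, n). n)") auto

declare LD_ode_sol.simps[simp del]

lemma LD_ode_lhs_LD_ode_sol:
  assumes "0 < \<alpha>" "\<alpha> < 1"
  shows "LD_ode_lhs \<alpha> m a (LD_ode_sol \<alpha> m a v) n = 0"
proof -
  have "LD_ode_sol \<alpha> m a v (n + m)
      = - (\<Sum>k<m. a k * (LD_ode_sol \<alpha> m a v (n + k) * of_real (LD_weight_prod \<alpha> n k)))
        / of_real (LD_weight_prod \<alpha> n m)"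
    by (subst LD_ode_sol.simps) (simp add: add.commute)
  then show ?thesis
    unfolding LD_ode_lhs_eq using LD_weight_prod_nonzero[OF assms] by simp
qed

lemma LD_ode_sol_initial:
  assumes "0 < \<alpha>" "\<alpha> < 1" "k < m"
  shows "LD_ode_sol \<alpha> m a v k * of_real (LD_weight_prod \<alpha> 0 k) = v k"
  using assms(3) LD_weight_prod_nonzero[OF assms(1,2)] by (subst LD_ode_sol.simps) simp

lemma LD_ode_initial_values_bij:
  assumes "0 < \<alpha>" "\<alpha> < 1"
  shows "bij_betw (\<lambda>c k. if k < m then c k * of_real (LD_weight_prod \<alpha> 0 k) else 0)
           {c. \<forall>n. LD_ode_lhs \<alpha> m a c n = 0} {v. \<forall>k\<ge>m. v k = 0}"
  (is "bij_betw ?\<Phi> ?R ?V")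
proof (rule bij_betw_imageI)
  show "inj_on ?\<Phi> ?R"
  proof (rule inj_onI)
    fix c d
    assume cd: "c \<in> ?R" "d \<in> ?R" "?\<Phi> c = ?\<Phi> d"
    have "LD_ode_lhs \<alpha> m a (c - d) n = 0" for n
      using cd LD_ode_lhs_add[of \<alpha> m a d "c - d" n] by simp
    moreover have "(c - d) k = 0" if "k < m" for k
      using fun_cong[OF cd(3), of k] that LD_weight_prod_nonzero[OF assms] by simp
    ultimately show "c = d"
      using LD_ode_lhs_eq_0_imp_eq_0[OF assms, of m a "c - d"] by (auto simp: fun_eq_iff)
  qed
  show "?\<Phi> ` ?R = ?V"
  proof (intro equalityI subsetI)
    fix v
    assume "v \<in> ?V"
    then have "v = ?\<Phi> (LD_ode_sol \<alpha> m a v)"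
      using LD_ode_sol_initial[OF assms] by (auto simp: fun_eq_iff)
    then show "v \<in> ?\<Phi> ` ?R"
      using LD_ode_lhs_LD_ode_sol[OF assms] by blast
  qed auto
qed

theorem mainTheorem16:
  fixes \<alpha> :: real and m :: nat and a :: "nat \<Rightarrow> complex"
  assumes "0 < \<alpha>" "\<alpha> < 1" "m \<ge> 1"
  defines "S \<equiv> {c. entire_ps c \<and>
             (\<forall>t::real. t \<ge> 0 \<longrightarrow>
                ps_eval ((LD \<alpha> ^^ m) c) t + (\<Sum>k<m. a k * ps_eval ((LD \<alpha> ^^ k) c) t) = 0)}"
  defines "\<Phi> \<equiv> (\<lambda>c k. if k < m then ps_eval ((LD \<alpha> ^^ k) c) 0 else 0)"
  shows "module.subspace cscale S
       \<and> vector_space.dim cscale S = m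
       \<and> Vector_Spaces.linear cscale cscale \<Phi>
       \<and> bij_betw \<Phi> S {v. \<forall>k\<ge>m. v k = 0}"
proof -
  have S: "S = {c. \<forall>n. LD_ode_lhs \<alpha> m a c n = 0}"
    unfolding S_def using LD_ode_solutions_eq[OF assms(1,2)] .
  have \<Phi>: "\<Phi> = (\<lambda>c k. if k < m then c k * of_real (LD_weight_prod \<alpha> 0 k) else 0)"
    unfolding \<Phi>_def LD_funpow_at_0 ..
  have subspace: "seq.subspace S"
    unfolding seq.subspace_def S by (simp add: LD_ode_lhs_add LD_ode_lhs_cscale LD_ode_lhs_zero)
  have linear: "Vector_Spaces.linear cscale cscale \<Phi>"
    unfolding Vector_Spaces.linear_iff \<Phi> using seq.vector_space_axioms
    by (auto simp: cscale_def fun_eq_iff algebra_simps)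
  have bij: "bij_betw \<Phi> S {v. \<forall>k\<ge>m. v k = 0}"
    unfolding S \<Phi> by (rule LD_ode_initial_values_bij[OF assms(1,2)])
  have "seq.dim S = seq.dim (\<Phi> ` S)"
    using seq_pair.dim_image_eq_inj_on[OF linear subspace] bij by (simp add: bij_betw_def)
  also have "\<dots> = m"
    using bij dim_eventually_zero_sequences by (simp add: bij_betw_def)
  finally show ?thesis
    using subspace linear bij by blast
qed

end
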